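(* Let $d\in\mathbb N$, $\mathcal D=\{1,\dots,d\}$, $f\in \mathrm L_2(\mathbb T^d)$ and $d_s\in\mathcal D$. Then $$\mathrm T_{d_s}f=\sum_{\substack{\mathbf u\subseteq\mathcal D\\|\mathbf u|\le d_s}}\left[\sum_{n=|\mathbf u|}^{d_s}(-1)^{n-|\mathbf u|}\binom{d-|\mathbf u|}{n-|\mathbf u|}\right]\mathrm P_{\mathbf u}f.$$
   Context: $\mathbb T=[0,1)$ with periodic identification. For $\mathbf u\subseteq\mathcal D$, $\mathbf u^c=\mathcal D\setminus\mathbf u$, $\mathbf x_{\mathbf u}=(x_i)_{i\in\mathbf u}$. Projection: $\mathrm P_{\mathbf u}f(\mathbf x_{\mathbf u})=\int_{\mathbb T^{|\mathbf u^c|}}f(\mathbf x)\,d\mathbf x_{\mathbf u^c}$, viewed as a function on $\mathbb T^d$. ANOVA terms: $f_{\mathbf u}=\mathrm P_{\mathbf u}f-\sum_{\mathbf v\subsetneq\mathbf u}f_{\mathbf v}$ (recursively). $\mathrm T_{d_s}f=\sum_{\mathbf u\subseteq\mathcal D,\,|\mathbf u|\le d_s}f_{\mathbf u}$. *)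

theory Defs
  imports "HOL-Analysis.Analysis"
begin

definition torus1 :: "real measure" where
  "torus1 = restrict_space lborel {0..<1}"

definition torus :: "nat \<Rightarrow> (nat \<Rightarrow> real) measure" where
  "torus d = PiM {1..d} (\<lambda>_. torus1)"

definition proj :: "nat \<Rightarrow> nat set \<Rightarrow> ((nat \<Rightarrow> real) \<Rightarrow> complex) \<Rightarrow> (nat \<Rightarrow> real) \<Rightarrow> complex" where
  "proj d u f x = (\<integral>y. f (merge u ({1..d} - u) (x, y)) \<partial>(PiM ({1..d} - u) (\<lambda>_. torus1)))"

function anova :: "nat \<Rightarrow> ((nat \<Rightarrow> real) \<Rightarrow> complex) \<Rightarrow> nat set \<Rightarrow> (nat \<Rightarrow> real) \<Rightarrow> complex" where
  "anova d f u = (if u \<subseteq> {1..d}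
     then (\<lambda>x. proj d u f x - (\<Sum>v\<in>{v. v \<subset> u}. anova d f v x))
     else (\<lambda>x. 0))"
  by auto
termination
  apply (relation "Wellfounded.measure (\<lambda>(d, f, u). card u)")
   apply simp
  apply (auto intro!: psubset_card_mono dest: finite_subset)
  done

definition trunc_anova :: "nat \<Rightarrow> nat \<Rightarrow> ((nat \<Rightarrow> real) \<Rightarrow> complex) \<Rightarrow> (nat \<Rightarrow> real) \<Rightarrow> complex" where
  "trunc_anova d ds f x = (\<Sum>u\<in>{u. u \<subseteq> {1..d} \<and> card u \<le> ds}. anova d f u x)"

end

theory Submission
  imports Defs
begin

text \<open>By the recursion defining them, the ANOVA terms are the Moebius inversion of the projections
  on the Boolean lattice of subsets: f_u = sum over v \<subseteq> u of (-1)^(|u|-|v|) P_v f.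
  Summing over |u| \<le> d_s and exchanging the order of summation, the coefficient of P_v f counts
  the supersets of v in D of each size n \<le> d_s with sign (-1)^(n-|v|), and there are
  binomial(d-|v|, n-|v|) of them. The identity holds pointwise for every f; no integrability is used.\<close>

lemma card_supersets_of_card:
  assumes "finite u" "w \<subseteq> u" "card w \<le> n"
  shows "card {v. w \<subseteq> v \<and> v \<subseteq> u \<and> card v = n} = (card u - card w) choose (n - card w)"
proof -
  have fw: "finite w" using assms finite_subset by blast
  have "bij_betw (\<lambda>B. B \<union> w) {B. B \<subseteq> u - w \<and> card B = n - card w} {v. w \<subseteq> v \<and> v \<subseteq> u \<and> card v = n}"
  proof (rule bij_betw_byWitness[where f'="\<lambda>v. v - w"])
    show "(\<lambda>B. B \<union> w) ` {B. B \<subseteq> u - w \<and> card B = n - card w} \<subseteq> {v. w \<subseteq> v \<and> v \<subseteq> u \<and> card v = n}"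
    proof clarify
      fix B assume B: "B \<subseteq> u - w" "card B = n - card w"
      have "finite B" using B assms finite_subset by blast
      then have "card (B \<union> w) = card B + card w" using fw B by (subst card_Un_disjoint) auto
      then show "w \<subseteq> B \<union> w \<and> B \<union> w \<subseteq> u \<and> card (B \<union> w) = n" using B assms by auto
    qed
    show "(\<lambda>v. v - w) ` {v. w \<subseteq> v \<and> v \<subseteq> u \<and> card v = n} \<subseteq> {B. B \<subseteq> u - w \<and> card B = n - card w}"
      using fw by (auto simp: card_Diff_subset)
  qed auto
  then have "card {v. w \<subseteq> v \<and> v \<subseteq> u \<and> card v = n} = card {B. B \<subseteq> u - w \<and> card B = n - card w}"
    by (simp add: bij_betw_same_card)
  also have "\<dots> = card (u - w) choose (n - card w)" using assms by (simp add: n_subsets)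
  also have "card (u - w) = card u - card w" using assms fw by (simp add: card_Diff_subset)
  finally show ?thesis .
qed

lemma sum_alternating_supersets_card_le:
  assumes "finite u" "w \<subseteq> u"
  shows "(\<Sum>v | w \<subseteq> v \<and> v \<subseteq> u \<and> card v \<le> m. (-1::'b::comm_ring_1) ^ (card v - card w))
       = (\<Sum>n = card w..m. (-1) ^ (n - card w) * of_nat ((card u - card w) choose (n - card w)))"
proof -
  let ?S = "{v. w \<subseteq> v \<and> v \<subseteq> u \<and> card v \<le> m}"
  have fin_S: "finite ?S" using assms(1) by (auto intro: finite_subset[of _ "Pow u"])
  have card_range: "card ` ?S \<subseteq> {card w..m}"
  proof clarify
    fix v assume "w \<subseteq> v" "v \<subseteq> u" "card v \<le> m"
    moreover have "finite v" using \<open>v \<subseteq> u\<close> assms(1) by (rule finite_subset)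
    ultimately show "card v \<in> {card w..m}" by (simp add: card_mono)
  qed
  have "(\<Sum>v\<in>?S. (-1::'b) ^ (card v - card w))
      = (\<Sum>n = card w..m. \<Sum>v | v \<in> ?S \<and> card v = n. (-1) ^ (card v - card w))"
    by (rule sum.group[symmetric, OF fin_S finite_atLeastAtMost card_range])
  also have "\<dots> = (\<Sum>n = card w..m. (-1) ^ (n - card w) * of_nat ((card u - card w) choose (n - card w)))"
  proof (rule sum.cong[OF refl])
    fix n assume n: "n \<in> {card w..m}"
    then have "{v. v \<in> ?S \<and> card v = n} = {v. w \<subseteq> v \<and> v \<subseteq> u \<and> card v = n}" by auto
    then show "(\<Sum>v | v \<in> ?S \<and> card v = n. (-1::'b) ^ (card v - card w))
        = (-1) ^ (n - card w) * of_nat ((card u - card w) choose (n - card w))"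
      using card_supersets_of_card[OF assms, of n] n by simp
  qed
  finally show ?thesis .
qed

lemma sum_alternating_supersets_eq_0:
  assumes "finite u" "w \<subset> u"
  shows "(\<Sum>v | w \<subseteq> v \<and> v \<subseteq> u. (-1::'b::comm_ring_1) ^ (card v - card w)) = 0"
proof -
  obtain k where k: "card u = k + card w" "0 < k"
    using psubset_card_mono[OF assms] by (metis less_imp_add_positive add.commute)
  have "{v. w \<subseteq> v \<and> v \<subseteq> u} = {v. w \<subseteq> v \<and> v \<subseteq> u \<and> card v \<le> card u}"
    using assms(1) by (auto intro: card_mono)
  then have "(\<Sum>v | w \<subseteq> v \<and> v \<subseteq> u. (-1::'b) ^ (card v - card w))
      = (\<Sum>n = card w..card u. (-1) ^ (n - card w) * of_nat ((card u - card w) choose (n - card w)))"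
    using sum_alternating_supersets_card_le[OF assms(1), of w "card u"] psubset_imp_subset[OF assms(2)] by simp
  also have "\<dots> = (\<Sum>n = 0 + card w..k + card w. (-1) ^ (n - card w) * of_nat (k choose (n - card w)))"
    unfolding k(1) by simp
  also have "\<dots> = (\<Sum>i\<le>k. (-1) ^ i * of_nat (k choose i))"
    by (simp only: sum.shift_bounds_cl_nat_ivl atLeast0AtMost add_diff_cancel_right')
  also have "\<dots> = 0" using k(2) by (rule choose_alternating_sum)
  finally show ?thesis .
qed

definition subset_mobius :: "('a set \<Rightarrow> 'b::comm_ring_1) \<Rightarrow> 'a set \<Rightarrow> 'b" where
  "subset_mobius g u = (\<Sum>v\<in>Pow u. (-1) ^ (card u - card v) * g v)"

lemma sum_Pow_subset_mobius:
  assumes "finite u"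
  shows "(\<Sum>v\<in>Pow u. subset_mobius g v) = g u"
proof -
  have "(\<Sum>v\<in>Pow u. subset_mobius g v)
      = (\<Sum>v\<in>Pow u. \<Sum>w | w \<in> Pow u \<and> w \<subseteq> v. (-1) ^ (card v - card w) * g w)"
    unfolding subset_mobius_def by (intro sum.cong refl) auto
  also have "\<dots> = (\<Sum>w\<in>Pow u. \<Sum>v | v \<in> Pow u \<and> w \<subseteq> v. (-1) ^ (card v - card w) * g w)"
    using assms by (intro sum.swap_restrict) auto
  also have "\<dots> = (\<Sum>w\<in>Pow u. if w = u then g u else 0)"
  proof (rule sum.cong[OF refl])
    fix w assume "w \<in> Pow u"
    have "(\<Sum>v | v \<in> Pow u \<and> w \<subseteq> v. (-1) ^ (card v - card w) * g w)
        = (\<Sum>v | w \<subseteq> v \<and> v \<subseteq> u. (-1) ^ (card v - card w)) * g w"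
      by (simp add: sum_distrib_right conj_commute)
    also have "\<dots> = (if w = u then g u else 0)"
    proof (cases "w = u")
      case True
      then have "{v. w \<subseteq> v \<and> v \<subseteq> u} = {u}" by auto
      with True show ?thesis by simp
    next
      case False
      with \<open>w \<in> Pow u\<close> have "w \<subset> u" by auto
      with False show ?thesis by (simp add: sum_alternating_supersets_eq_0[OF assms])
    qed
    finally show "(\<Sum>v | v \<in> Pow u \<and> w \<subseteq> v. (-1) ^ (card v - card w) * g w)
        = (if w = u then g u else 0)" .
  qed
  also have "\<dots> = g u" using assms by (simp add: sum.delta')
  finally show ?thesis .
qed

lemma sum_subset_mobius_card_le:
  fixes g :: "'a set \<Rightarrow> 'b::comm_ring_1"
  assumes "finite S"
  shows "(\<Sum>u | u \<subseteq> S \<and> card u \<le> m. subset_mobius g u)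
       = (\<Sum>v | v \<subseteq> S \<and> card v \<le> m.
            (\<Sum>n = card v..m. (-1) ^ (n - card v) * of_nat ((card S - card v) choose (n - card v))) * g v)"
proof -
  let ?U = "{u. u \<subseteq> S \<and> card u \<le> m}"
  have fin_U: "finite ?U" using assms by (auto intro: finite_subset[of _ "Pow S"])
  have "(\<Sum>u\<in>?U. subset_mobius g u)
      = (\<Sum>u\<in>?U. \<Sum>v | v \<in> ?U \<and> v \<subseteq> u. (-1) ^ (card u - card v) * g v)"
  proof (rule sum.cong[OF refl])
    fix u assume u: "u \<in> ?U"
    have "Pow u = {v. v \<in> ?U \<and> v \<subseteq> u}"
    proof (intro equalityI subsetI)
      fix v assume "v \<in> Pow u"
      moreover have "finite u" using u assms finite_subset by blast
      ultimately have "card v \<le> card u" by (simp add: card_mono)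
      with u \<open>v \<in> Pow u\<close> show "v \<in> {v. v \<in> ?U \<and> v \<subseteq> u}" by auto
    qed auto
    then show "subset_mobius g u = (\<Sum>v | v \<in> ?U \<and> v \<subseteq> u. (-1) ^ (card u - card v) * g v)"
      by (simp add: subset_mobius_def)
  qed
  also have "\<dots> = (\<Sum>v\<in>?U. \<Sum>u | u \<in> ?U \<and> v \<subseteq> u. (-1) ^ (card u - card v) * g v)"
    using fin_U by (rule sum.swap_restrict[OF _ fin_U])
  also have "\<dots> = (\<Sum>v\<in>?U.
      (\<Sum>n = card v..m. (-1) ^ (n - card v) * of_nat ((card S - card v) choose (n - card v))) * g v)"
  proof (rule sum.cong[OF refl])
    fix v assume "v \<in> ?U"
    have "{u. u \<in> ?U \<and> v \<subseteq> u} = {u. v \<subseteq> u \<and> u \<subseteq> S \<and> card u \<le> m}" by auto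
    then have "(\<Sum>u | u \<in> ?U \<and> v \<subseteq> u. (-1::'b) ^ (card u - card v))
        = (\<Sum>n = card v..m. (-1) ^ (n - card v) * of_nat ((card S - card v) choose (n - card v)))"
      using sum_alternating_supersets_card_le[OF assms, of v m] \<open>v \<in> ?U\<close> by simp
    then show "(\<Sum>u | u \<in> ?U \<and> v \<subseteq> u. (-1) ^ (card u - card v) * g v)
        = (\<Sum>n = card v..m. (-1) ^ (n - card v) * of_nat ((card S - card v) choose (n - card v))) * g v"
      by (simp add: sum_distrib_right[symmetric])
  qed
  finally show ?thesis .
qed

lemma anova_eq_subset_mobius:
  "u \<subseteq> {1..d} \<Longrightarrow> anova d f u x = subset_mobius (\<lambda>v. proj d v f x) u"
proof (induction "card u" arbitrary: u rule: less_induct)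
  case less
  have fin_u: "finite u" using less.prems finite_subset by blast
  have "anova d f u x = proj d u f x - (\<Sum>v | v \<subset> u. anova d f v x)"
    using less.prems by simp
  also have "(\<Sum>v | v \<subset> u. anova d f v x) = (\<Sum>v\<in>Pow u - {u}. subset_mobius (\<lambda>v. proj d v f x) v)"
  proof (rule sum.cong)
    fix v assume "v \<in> Pow u - {u}"
    then have "v \<subset> u" by auto
    then show "anova d f v x = subset_mobius (\<lambda>v. proj d v f x) v"
      using less fin_u by (meson order.trans psubset_card_mono psubset_imp_subset)
  qed auto
  also have "\<dots> = proj d u f x - subset_mobius (\<lambda>v. proj d v f x) u"
    using fin_u by (simp add: sum_diff1 sum_Pow_subset_mobius)
  finally show ?case by simp
qed

theorem corollary4p5:
  fixes d ds :: nat and f :: "(nat \<Rightarrow> real) \<Rightarrow> complex"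
  assumes "ds \<in> {1..d}"
    and "f \<in> borel_measurable (torus d)"
    and "integrable (torus d) (\<lambda>x. (cmod (f x))\<^sup>2)"
  shows "\<forall>x \<in> space (torus d).
    trunc_anova d ds f x =
      (\<Sum>u\<in>{u. u \<subseteq> {1..d} \<and> card u \<le> ds}.
         (\<Sum>n = card u..ds. (-1::complex) ^ (n - card u) * of_nat ((d - card u) choose (n - card u)))
         * proj d u f x)"
proof -
  have "trunc_anova d ds f x = (\<Sum>u | u \<subseteq> {1..d} \<and> card u \<le> ds. subset_mobius (\<lambda>v. proj d v f x) u)"
    for x unfolding trunc_anova_def by (intro sum.cong refl anova_eq_subset_mobius) auto
  then show ?thesis by (simp add: sum_subset_mobius_card_le)
qed

end
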